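(* Let $r\ge 1$ and $K\ge1$ be integers, $\beta_1,\beta_2>0$, $\theta_1,\theta_2>0$ and $\alpha>0$. Let $\zeta=(1,0,0)$, $\eta=(0,0,1)$, $v=(0,0,1)$, $v'=(0,1,0)$, and for $i=1,\dots,r$ let $k_i=2^{i-1}K\zeta\in\mathbb{Z}^3$ and $k_i'=k_i+\eta$. Define \[ u_0(x)=r^{-\beta_1}\sum_{i=1}^r|k_i|^{\theta_1}v\cos(k_i\cdot x),\qquad b_0(x)=r^{-\beta_2}\sum_{i=1}^r|k_i'|^{\theta_2}v'\cos(k_i'\cdot x). \] Then for all $t>0$, \[ \|e^{-t(-\Delta)^{\alpha}}u_0\|_{L^\infty}\lesssim r^{-\beta_1}t^{-\frac{\theta_1}{2\alpha}},\qquad \|e^{-t(-\Delta)^{\alpha}}b_0\|_{L^\infty}\lesssim r^{-\beta_2}t^{-\frac{\theta_2}{2\alpha}}, \] with implicit constants independent of $r$, $K$ and $t$.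
   Context: $e^{-t(-\Delta)^\alpha}$ denotes the fractional heat semigroup, i.e. the Fourier multiplier $e^{-t|\xi|^{2\alpha}}$; in particular $e^{-t(-\Delta)^\alpha}\big(w\cos(k\cdot x)\big)=e^{-|k|^{2\alpha}t}w\cos(k\cdot x)$. *)

theory Defs
  imports "HOL-Analysis.Analysis"
begin

text \<open>The fractional heat semigroup
  e^{-t(-\<Delta>)^\<alpha>} is the Fourier multiplier e^{-t|\<xi>|^{2\<alpha>}}, acting on each
  mode by e^{-|k|^{2\<alpha>} t} (and linearly on finite sums).\<close>

definition cos_sum :: "'i set \<Rightarrow> ('i \<Rightarrow> real^3) \<Rightarrow> ('i \<Rightarrow> real^3) \<Rightarrow> real^3 \<Rightarrow> real^3" where
  "cos_sum I k a x = (\<Sum>i\<in>I. cos (k i \<bullet> x) *\<^sub>R a i)"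

definition frac_heat_cos_sum ::
  "real \<Rightarrow> real \<Rightarrow> 'i set \<Rightarrow> ('i \<Rightarrow> real^3) \<Rightarrow> ('i \<Rightarrow> real^3) \<Rightarrow> real^3 \<Rightarrow> real^3" where
  "frac_heat_cos_sum \<alpha> t I k a x =
     (\<Sum>i\<in>I. exp (- (norm (k i) powr (2 * \<alpha>)) * t) *\<^sub>R (cos (k i \<bullet> x) *\<^sub>R a i))"

definition zeta3 :: "real^3" where "zeta3 = vector [1, 0, 0]"
definition eta3 :: "real^3" where "eta3 = vector [0, 0, 1]"
definition v3 :: "real^3" where "v3 = vector [0, 0, 1]"
definition v3' :: "real^3" where "v3' = vector [0, 1, 0]"

definition kvec :: "nat \<Rightarrow> nat \<Rightarrow> real^3" where
  "kvec K i = (2 ^ (i - 1) * real K) *\<^sub>R zeta3"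
definition kvec' :: "nat \<Rightarrow> nat \<Rightarrow> real^3" where
  "kvec' K i = kvec K i + eta3"

definition u0_coeff :: "real \<Rightarrow> real \<Rightarrow> nat \<Rightarrow> nat \<Rightarrow> nat \<Rightarrow> real^3" where
  "u0_coeff \<beta>1 \<theta>1 r K i = (real r powr (- \<beta>1) * norm (kvec K i) powr \<theta>1) *\<^sub>R v3"
definition b0_coeff :: "real \<Rightarrow> real \<Rightarrow> nat \<Rightarrow> nat \<Rightarrow> nat \<Rightarrow> real^3" where
  "b0_coeff \<beta>2 \<theta>2 r K i = (real r powr (- \<beta>2) * norm (kvec' K i) powr \<theta>2) *\<^sub>R v3'"

end

theory Submission
  imports Defs
begin

text \<open>Bounding |cos| by 1, the solution is dominated by
  r^(-\<beta>) * sum_i |k_i|^\<theta> * exp (-|k_i|^(2\<alpha>) t).  With s_i = |k_i|^(2\<alpha>) t and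
  p = \<theta>/(2\<alpha>) this is r^(-\<beta>) t^(-p) * sum_i s_i^p exp (-s_i), and since the frequencies
  grow geometrically, s_(i+1) \<ge> q s_i for a fixed q > 1.  The terms with s_i \<le> 1 are at
  most s_i^p, which decay geometrically downwards from the largest such index; the terms
  with s_i \<ge> 1 are at most M s_i^(-p), which decay geometrically upwards from the smallest
  one.  So sum_i s_i^p exp (-s_i) is bounded independently of r, K and t.\<close>

lemma powr_le_const_mult_exp:
  fixes p :: real
  obtains M where "M > 0" "\<And>s. s \<ge> 1 \<Longrightarrow> s powr p \<le> M * exp s"
proof -
  define N where "N = Suc (nat \<lceil>p\<rceil>)"
  have N: "N > 0" "p \<le> real N" unfolding N_def by linarith+
  have "s powr p \<le> real N ^ N * exp s" if s: "s \<ge> 1" for s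
  proof -
    have "s powr p \<le> s ^ N"
      using s N powr_mono[of p "real N" s] by (simp add: powr_realpow)
    also have "\<dots> = real N ^ N * (s / real N) ^ N"
      using N by (simp add: power_divide)
    also have "\<dots> \<le> real N ^ N * (1 + s / real N) ^ N"
      using s N by (intro mult_left_mono power_mono) auto
    also have "\<dots> \<le> real N ^ N * exp s"
      using s N by (intro mult_left_mono exp_ge_one_plus_x_over_n_power_n) auto
    finally show ?thesis .
  qed
  then show thesis using N by (intro that[of "real N ^ N"]) auto
qed

lemma sum_le_geometric_if_inj:
  fixes x :: real
  assumes "finite A" "inj_on f A" "0 \<le> x" "x < 1" "\<And>i. i \<in> A \<Longrightarrow> g i \<le> x ^ f i"
  shows "sum g A \<le> 1 / (1 - x)"
proof -
  have "sum g A \<le> (\<Sum>i\<in>A. x ^ f i)"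
    using assms(5) by (rule sum_mono)
  also have "\<dots> = (\<Sum>j\<in>f ` A. x ^ j)"
    using assms(2) by (simp add: sum.reindex)
  also have "\<dots> \<le> (\<Sum>j. x ^ j)"
    using assms by (intro sum_le_suminf summable_geometric) auto
  also have "\<dots> = 1 / (1 - x)"
    using assms by (simp add: suminf_geometric)
  finally show ?thesis .
qed

lemma power_powr_eq_powr_power:
  fixes q :: real
  assumes "q > 0"
  shows "(q ^ n) powr a = (q powr a) ^ n"
  using assms by (simp add: powr_realpow[symmetric] powr_powr powr_power mult.commute)

lemma lacunary_growth:
  fixes s :: "nat \<Rightarrow> real"
  assumes "\<And>i. q * s i \<le> s (Suc i)" "q \<ge> 0" "i \<le> j"
  shows "q ^ (j - i) * s i \<le> s j"
  using assms(3)
proof (induction j rule: dec_induct)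
  case base
  then show ?case by simp
next
  case (step j)
  have "q ^ (Suc j - i) * s i = q * (q ^ (j - i) * s i)"
    using step(1) by (simp add: Suc_diff_le)
  also have "\<dots> \<le> q * s j"
    using step assms(2) by (intro mult_left_mono)
  also have "\<dots> \<le> s (Suc j)"
    by (rule assms(1))
  finally show ?case .
qed

lemma lacunary_sum_powr_le_one:
  fixes s :: "nat \<Rightarrow> real"
  assumes q: "q > 1" and p: "p > 0"
    and s: "\<And>i. s i > 0" "\<And>i. q * s i \<le> s (Suc i)"
    and A: "finite A" "\<And>i. i \<in> A \<Longrightarrow> s i \<le> 1"
  shows "(\<Sum>i\<in>A. s i powr p) \<le> 1 / (1 - q powr (- p))"
proof (cases "A = {}")
  case True
  have "q powr (- p) < 1"
    using q p by (simp add: powr_less_one)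
  then show ?thesis using True by simp
next
  case False
  define m where "m = Max A"
  have m: "m \<in> A" "\<And>i. i \<in> A \<Longrightarrow> i \<le> m"
    using A False by (simp_all add: m_def)
  show ?thesis
  proof (rule sum_le_geometric_if_inj[where f = "\<lambda>i. m - i"])
    show "inj_on (\<lambda>i. m - i) A"
      using m(2) by (intro inj_onI) (metis diff_diff_cancel)
    show "q powr - p < 1"
      using q p by (simp add: powr_less_one)
  next
    fix i assume i: "i \<in> A"
    have "q ^ (m - i) * s i \<le> s m"
      using lacunary_growth[of q s i m] s(2) q m(2)[OF i] by simp
    also have "\<dots> \<le> 1"
      using A(2)[OF m(1)] .
    finally have "q ^ (m - i) * s i \<le> 1" .
    then have "s i \<le> (q ^ (m - i)) powr (- 1)"
      using q by (simp add: powr_minus field_simps)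
    then have "s i powr p \<le> ((q ^ (m - i)) powr (- 1)) powr p"
      using s(1)[of i] p by (intro powr_mono2) auto
    also have "\<dots> = (q ^ (m - i)) powr (- p)"
      using q by (simp add: powr_divide powr_minus_divide)
    also have "\<dots> = (q powr (- p)) ^ (m - i)"
      using q by (simp add: power_powr_eq_powr_power)
    finally show "s i powr p \<le> (q powr (- p)) ^ (m - i)" .
  qed (use A in auto)
qed

lemma lacunary_sum_powr_ge_one:
  fixes s :: "nat \<Rightarrow> real"
  assumes q: "q > 1" and p: "p > 0"
    and s: "\<And>i. q * s i \<le> s (Suc i)"
    and A: "finite A" "\<And>i. i \<in> A \<Longrightarrow> 1 \<le> s i"
  shows "(\<Sum>i\<in>A. s i powr (- p)) \<le> 1 / (1 - q powr (- p))"
proof (cases "A = {}")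
  case True
  have "q powr (- p) < 1"
    using q p by (simp add: powr_less_one)
  then show ?thesis using True by simp
next
  case False
  define m where "m = Min A"
  have m: "m \<in> A" "\<And>i. i \<in> A \<Longrightarrow> m \<le> i"
    using A False by (simp_all add: m_def)
  show ?thesis
  proof (rule sum_le_geometric_if_inj[where f = "\<lambda>i. i - m"])
    show "inj_on (\<lambda>i. i - m) A"
      using m(2) by (intro inj_onI) (metis le_add_diff_inverse)
    show "q powr - p < 1"
      using q p by (simp add: powr_less_one)
  next
    fix i assume i: "i \<in> A"
    have "q ^ (i - m) \<le> q ^ (i - m) * s m"
      using q A(2)[OF m(1)] by simp
    also have "\<dots> \<le> s i"
      using lacunary_growth[of q s m i] s q m(2)[OF i] by simp
    finally have "s i powr (- p) \<le> (q ^ (i - m)) powr (- p)"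
      using q p by (intro powr_mono2') auto
    also have "\<dots> = (q powr (- p)) ^ (i - m)"
      using q by (simp add: power_powr_eq_powr_power)
    finally show "s i powr (- p) \<le> (q powr (- p)) ^ (i - m)" .
  qed (use A in auto)
qed

lemma lacunary_sum_powr_exp_bounded:
  fixes q p :: real
  assumes q: "q > 1" and p: "p > 0"
  obtains C where "C > 0"
    "\<And>s I. finite I \<Longrightarrow> (\<And>i. s i > 0) \<Longrightarrow> (\<And>i. q * s i \<le> s (Suc i)) \<Longrightarrow>
       (\<Sum>i\<in>I. s i powr p * exp (- s i)) \<le> C"
proof -
  obtain M where M: "M > 0" "\<And>s. s \<ge> 1 \<Longrightarrow> s powr (2 * p) \<le> M * exp s"
    using powr_le_const_mult_exp by blast
  define G where "G = 1 / (1 - q powr (- p))"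
  have G: "G > 0"
    using q p by (simp add: G_def powr_less_one)
  have "(\<Sum>i\<in>I. s i powr p * exp (- s i)) \<le> G + M * G"
    if I: "finite I" and s: "\<And>i. s i > 0" "\<And>i. q * s i \<le> s (Suc i)" for s I
  proof -
    let ?g = "\<lambda>i. s i powr p * exp (- s i)"
    define A where "A = {i \<in> I. s i \<le> 1}"
    define B where "B = {i \<in> I. 1 < s i}"
    have AB: "I = A \<union> B" "A \<inter> B = {}" "finite A" "finite B"
      using I by (auto simp: A_def B_def)
    have "sum ?g A \<le> (\<Sum>i\<in>A. s i powr p)"
      using s(1) by (intro sum_mono mult_left_le) (auto intro: less_imp_le)
    also have "\<dots> \<le> G"
      unfolding G_def using q p s AB(3) by (intro lacunary_sum_powr_le_one) (auto simp: A_def)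
    finally have small: "sum ?g A \<le> G" .
    have "?g i \<le> M * s i powr (- p)" if "i \<in> B" for i
    proof -
      have si: "1 \<le> s i" using that by (simp add: B_def)
      have "?g i = s i powr (2 * p) * exp (- s i) * s i powr (- p)"
        using s(1)[of i] by (simp add: powr_minus powr_add[symmetric] field_simps)
      also have "\<dots> \<le> M * exp (s i) * exp (- s i) * s i powr (- p)"
        using M(2)[OF si] by (intro mult_right_mono) auto
      also have "\<dots> = M * s i powr (- p)"
        by (simp add: exp_minus)
      finally show ?thesis .
    qed
    then have "sum ?g B \<le> M * (\<Sum>i\<in>B. s i powr (- p))"
      by (simp add: sum_distrib_left sum_mono)
    also have "\<dots> \<le> M * G"
      unfolding G_def using q p s(2) AB(4) M(1)
      by (intro mult_left_mono lacunary_sum_powr_ge_one) (auto simp: B_def)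
    finally have large: "sum ?g B \<le> M * G" .
    show ?thesis
      using small large AB by (simp add: sum.union_disjoint)
  qed
  moreover have "G + M * G > 0"
    using G M(1) by (intro add_pos_pos mult_pos_pos)
  ultimately show thesis
    using that by blast
qed

lemma lacunary_heat_sum_bound:
  fixes \<alpha> \<theta> l :: real
  assumes l: "l > 1" and \<alpha>: "\<alpha> > 0" and \<theta>: "\<theta> > 0"
  obtains C where "C > 0"
    "\<And>n I t. finite I \<Longrightarrow> (\<And>i. n i > 0) \<Longrightarrow> (\<And>i. l * n i \<le> n (Suc i)) \<Longrightarrow> t > 0 \<Longrightarrow>
       (\<Sum>i\<in>I. exp (- (n i powr (2 * \<alpha>)) * t) * n i powr \<theta>) \<le> C * t powr (- \<theta> / (2 * \<alpha>))"
proof -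
  define p where "p = \<theta> / (2 * \<alpha>)"
  define q where "q = l powr (2 * \<alpha>)"
  have p: "p > 0" and q: "q > 1"
    using l \<alpha> \<theta> by (simp_all add: p_def q_def)
  obtain C where C: "C > 0"
    "\<And>s I. finite I \<Longrightarrow> (\<And>i. s i > 0) \<Longrightarrow> (\<And>i. q * s i \<le> s (Suc i)) \<Longrightarrow>
       (\<Sum>i\<in>I. s i powr p * exp (- s i)) \<le> C"
    using lacunary_sum_powr_exp_bounded[OF q p] by blast
  have "(\<Sum>i\<in>I. exp (- (n i powr (2 * \<alpha>)) * t) * n i powr \<theta>) \<le> C * t powr (- p)"
    if I: "finite I" and n: "\<And>i. n i > 0" "\<And>i. l * n i \<le> n (Suc i)" and t: "t > 0"
    for n I t
  proof -
    define s where "s i = n i powr (2 * \<alpha>) * t" for i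
    have s_pos: "s i > 0" for i
      using n(1)[of i] t by (simp add: s_def)
    have s_lac: "q * s i \<le> s (Suc i)" for i
    proof -
      have "q * n i powr (2 * \<alpha>) = (l * n i) powr (2 * \<alpha>)"
        using l n(1)[of i] by (simp add: q_def powr_mult)
      also have "\<dots> \<le> n (Suc i) powr (2 * \<alpha>)"
        using n l \<alpha> by (intro powr_mono2) (auto intro: less_imp_le)
      finally show ?thesis
        using t by (simp add: s_def mult.assoc[symmetric])
    qed
    have summand: "exp (- (n i powr (2 * \<alpha>)) * t) * n i powr \<theta> = t powr (- p) * (s i powr p * exp (- s i))"
      for i
    proof -
      have "s i powr p = n i powr \<theta> * t powr p"
        using n(1)[of i] t \<alpha> by (simp add: s_def p_def powr_mult powr_powr)
      then show ?thesis
        using t by (simp add: s_def powr_minus field_simps)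
    qed
    have "(\<Sum>i\<in>I. exp (- (n i powr (2 * \<alpha>)) * t) * n i powr \<theta>)
        = t powr (- p) * (\<Sum>i\<in>I. s i powr p * exp (- s i))"
      unfolding sum_distrib_left by (rule sum.cong[OF refl summand])
    also have "\<dots> \<le> t powr (- p) * C"
      using C(2)[of I s] I s_pos s_lac by (intro mult_left_mono) auto
    finally show ?thesis by (simp add: mult.commute)
  qed
  then show thesis
    using C(1) by (intro that[of C]) (auto simp: p_def)
qed

lemma norm_frac_heat_cos_sum_le:
  "norm (frac_heat_cos_sum \<alpha> t I k a x)
     \<le> (\<Sum>i\<in>I. exp (- (norm (k i) powr (2 * \<alpha>)) * t) * norm (a i))"
  unfolding frac_heat_cos_sum_def
proof (rule order.trans[OF norm_sum sum_mono])
  fix i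
  have "\<bar>cos (k i \<bullet> x)\<bar> * norm (a i) \<le> norm (a i)"
    using mult_right_mono[OF abs_cos_le_one norm_ge_zero] by simp
  then show "norm (exp (- (norm (k i) powr (2 * \<alpha>)) * t) *\<^sub>R cos (k i \<bullet> x) *\<^sub>R a i)
      \<le> exp (- (norm (k i) powr (2 * \<alpha>)) * t) * norm (a i)"
    by (simp add: abs_mult mult.assoc mult_left_mono)
qed

text \<open>Only indices from 1 on are constrained: by truncated subtraction kvec K 0 = kvec K 1,
  so the frequencies are lacunary only from index 1.\<close>

lemma norm_frac_heat_cos_sum_lacunary:
  fixes \<alpha> \<theta> l :: real
  assumes "l > 1" "\<alpha> > 0" "\<theta> > 0"
  obtains C where "C > 0"
    "\<And>k c v t r x. (\<And>i. k (Suc i) \<noteq> 0) \<Longrightarrow> (\<And>i. l * norm (k (Suc i)) \<le> norm (k (Suc (Suc i)))) \<Longrightarrow>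
       norm v = 1 \<Longrightarrow> c \<ge> 0 \<Longrightarrow> t > 0 \<Longrightarrow>
       norm (frac_heat_cos_sum \<alpha> t {1..r} k (\<lambda>i. (c * norm (k i) powr \<theta>) *\<^sub>R v) x)
         \<le> C * c * t powr (- \<theta> / (2 * \<alpha>))"
proof -
  obtain C where C: "C > 0"
    "\<And>n I t. finite I \<Longrightarrow> (\<And>i. n i > 0) \<Longrightarrow> (\<And>i. l * n i \<le> n (Suc i)) \<Longrightarrow> t > 0 \<Longrightarrow>
       (\<Sum>i\<in>I. exp (- (n i powr (2 * \<alpha>)) * t) * n i powr \<theta>) \<le> C * t powr (- \<theta> / (2 * \<alpha>))"
    using lacunary_heat_sum_bound[OF assms] by blast
  have "norm (frac_heat_cos_sum \<alpha> t {1..r} k (\<lambda>i. (c * norm (k i) powr \<theta>) *\<^sub>R v) x)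
      \<le> C * c * t powr (- \<theta> / (2 * \<alpha>))"
    if k: "\<And>i. k (Suc i) \<noteq> 0" "\<And>i. l * norm (k (Suc i)) \<le> norm (k (Suc (Suc i)))"
      and v: "norm v = 1" and c: "c \<ge> 0" and t: "t > 0" for k c v t r x
  proof -
    have "norm (frac_heat_cos_sum \<alpha> t {1..r} k (\<lambda>i. (c * norm (k i) powr \<theta>) *\<^sub>R v) x)
        \<le> (\<Sum>i\<in>{1..r}. exp (- (norm (k i) powr (2 * \<alpha>)) * t) * norm ((c * norm (k i) powr \<theta>) *\<^sub>R v))"
      by (rule norm_frac_heat_cos_sum_le)
    also have "\<dots> = c * (\<Sum>j<r. exp (- (norm (k (Suc j)) powr (2 * \<alpha>)) * t) * norm (k (Suc j)) powr \<theta>)"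
      using v c by (simp add: sum.atLeast1_atMost_eq sum_distrib_left mult_ac)
    also have "\<dots> \<le> c * (C * t powr (- \<theta> / (2 * \<alpha>)))"
      using c k t by (intro mult_left_mono C(2)) auto
    finally show ?thesis by (simp add: mult_ac)
  qed
  then show thesis
    using C(1) by (intro that[of C]) auto
qed

lemma norm_kvec: "norm (kvec K i) = 2 ^ (i - 1) * real K"
  by (simp add: kvec_def zeta3_def norm_eq_sqrt_inner inner_vec_def sum_3)

lemma norm_kvec': "norm (kvec' K i) = sqrt ((2 ^ (i - 1) * real K)\<^sup>2 + 1)"
  by (simp add: kvec'_def kvec_def zeta3_def eta3_def norm_eq_sqrt_inner inner_vec_def sum_3
      power2_eq_square)

lemma norm_v3: "norm v3 = 1" "norm v3' = 1"
  by (simp_all add: v3_def v3'_def norm_eq_sqrt_inner inner_vec_def sum_3)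

lemma kvec_Suc_nonzero: "K \<ge> 1 \<Longrightarrow> kvec K (Suc i) \<noteq> 0"
  by (simp flip: zero_less_norm_iff add: norm_kvec)

lemma kvec'_nonzero: "kvec' K i \<noteq> 0"
  by (simp flip: zero_less_norm_iff add: norm_kvec' add_nonneg_pos)

lemma kvec_lacunary: "norm (kvec K (Suc (Suc i))) = 2 * norm (kvec K (Suc i))"
  by (simp add: norm_kvec)

lemma kvec'_lacunary:
  assumes "K \<ge> 1"
  shows "sqrt 2 * norm (kvec' K (Suc i)) \<le> norm (kvec' K (Suc (Suc i)))"
proof -
  define a where "a = (2::real) ^ i * real K"
  have "1 \<le> a"
    using assms one_le_power[of "2::real" i] mult_mono[of 1 "2 ^ i" 1 "real K"] by (simp add: a_def)
  then have "1 \<le> a * a"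
    using mult_mono[of 1 a 1 a] by simp
  then have "2 * (a\<^sup>2 + 1) \<le> (2 * a)\<^sup>2 + 1"
    by (simp add: power2_eq_square algebra_simps)
  then have "sqrt 2 * sqrt (a\<^sup>2 + 1) \<le> sqrt ((2 * a)\<^sup>2 + 1)"
    by (simp add: real_sqrt_mult[symmetric])
  then show ?thesis
    by (simp add: norm_kvec' a_def mult.assoc)
qed

lemma norm_frac_heat_u0_le:
  fixes \<alpha> \<beta> \<theta> :: real
  assumes "\<alpha> > 0" "\<theta> > 0"
  obtains C where "C > 0"
    "\<And>r K t x. K \<ge> 1 \<Longrightarrow> t > 0 \<Longrightarrow>
       norm (frac_heat_cos_sum \<alpha> t {1..r} (kvec K) (u0_coeff \<beta> \<theta> r K) x)
         \<le> C * real r powr (- \<beta>) * t powr (- \<theta> / (2 * \<alpha>))"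
proof -
  obtain C where "C > 0" and C:
    "\<And>k c v t r x. (\<And>i. k (Suc i) \<noteq> 0) \<Longrightarrow> (\<And>i. 2 * norm (k (Suc i)) \<le> norm (k (Suc (Suc i)))) \<Longrightarrow>
       norm v = 1 \<Longrightarrow> c \<ge> 0 \<Longrightarrow> t > 0 \<Longrightarrow>
       norm (frac_heat_cos_sum \<alpha> t {1..r} k (\<lambda>i. (c * norm (k i) powr \<theta>) *\<^sub>R v) x)
         \<le> C * c * t powr (- \<theta> / (2 * \<alpha>))"
    using norm_frac_heat_cos_sum_lacunary[of 2 \<alpha> \<theta>] assms by auto
  have coeff: "u0_coeff \<beta> \<theta> r K = (\<lambda>i. (real r powr (- \<beta>) * norm (kvec K i) powr \<theta>) *\<^sub>R v3)" for r K
    by (simp add: u0_coeff_def fun_eq_iff)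
  show thesis
  proof (rule that[OF \<open>C > 0\<close>])
    fix r K :: nat and t :: real and x :: "real^3"
    assume "K \<ge> 1" "t > 0"
    then show "norm (frac_heat_cos_sum \<alpha> t {1..r} (kvec K) (u0_coeff \<beta> \<theta> r K) x)
        \<le> C * real r powr (- \<beta>) * t powr (- \<theta> / (2 * \<alpha>))"
      unfolding coeff by (intro C) (simp_all add: kvec_Suc_nonzero kvec_lacunary norm_v3)
  qed
qed

lemma norm_frac_heat_b0_le:
  fixes \<alpha> \<beta> \<theta> :: real
  assumes "\<alpha> > 0" "\<theta> > 0"
  obtains C where "C > 0"
    "\<And>r K t x. K \<ge> 1 \<Longrightarrow> t > 0 \<Longrightarrow>
       norm (frac_heat_cos_sum \<alpha> t {1..r} (kvec' K) (b0_coeff \<beta> \<theta> r K) x)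
         \<le> C * real r powr (- \<beta>) * t powr (- \<theta> / (2 * \<alpha>))"
proof -
  obtain C where "C > 0" and C:
    "\<And>k c v t r x. (\<And>i. k (Suc i) \<noteq> 0) \<Longrightarrow> (\<And>i. sqrt 2 * norm (k (Suc i)) \<le> norm (k (Suc (Suc i)))) \<Longrightarrow>
       norm v = 1 \<Longrightarrow> c \<ge> 0 \<Longrightarrow> t > 0 \<Longrightarrow>
       norm (frac_heat_cos_sum \<alpha> t {1..r} k (\<lambda>i. (c * norm (k i) powr \<theta>) *\<^sub>R v) x)
         \<le> C * c * t powr (- \<theta> / (2 * \<alpha>))"
    using norm_frac_heat_cos_sum_lacunary[of "sqrt 2" \<alpha> \<theta>] assms by auto
  have coeff: "b0_coeff \<beta> \<theta> r K = (\<lambda>i. (real r powr (- \<beta>) * norm (kvec' K i) powr \<theta>) *\<^sub>R v3')" for r K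
    by (simp add: b0_coeff_def fun_eq_iff)
  show thesis
  proof (rule that[OF \<open>C > 0\<close>])
    fix r K :: nat and t :: real and x :: "real^3"
    assume "K \<ge> 1" "t > 0"
    then show "norm (frac_heat_cos_sum \<alpha> t {1..r} (kvec' K) (b0_coeff \<beta> \<theta> r K) x)
        \<le> C * real r powr (- \<beta>) * t powr (- \<theta> / (2 * \<alpha>))"
      unfolding coeff by (intro C) (simp_all add: kvec'_nonzero kvec'_lacunary norm_v3)
  qed
qed

theorem lemma4p3:
  fixes \<beta>1 \<beta>2 \<theta>1 \<theta>2 \<alpha> :: real
  assumes "\<beta>1 > 0" "\<beta>2 > 0" "\<theta>1 > 0" "\<theta>2 > 0" "\<alpha> > 0"
  shows "\<exists>C>0. \<forall>(r::nat) (K::nat) (t::real). r \<ge> 1 \<longrightarrow> K \<ge> 1 \<longrightarrow> t > 0 \<longrightarrow>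
     (\<forall>x. norm (frac_heat_cos_sum \<alpha> t {1..r} (kvec K) (u0_coeff \<beta>1 \<theta>1 r K) x)
            \<le> C * real r powr (- \<beta>1) * t powr (- \<theta>1 / (2 * \<alpha>))) \<and>
     (\<forall>x. norm (frac_heat_cos_sum \<alpha> t {1..r} (kvec' K) (b0_coeff \<beta>2 \<theta>2 r K) x)
            \<le> C * real r powr (- \<beta>2) * t powr (- \<theta>2 / (2 * \<alpha>)))"
proof -
  obtain C1 where "C1 > 0" and u0_bound: "\<And>r K t x. K \<ge> 1 \<Longrightarrow> t > 0 \<Longrightarrow>
      norm (frac_heat_cos_sum \<alpha> t {1..r} (kvec K) (u0_coeff \<beta>1 \<theta>1 r K) x)
        \<le> C1 * real r powr (- \<beta>1) * t powr (- \<theta>1 / (2 * \<alpha>))"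
    using norm_frac_heat_u0_le[of \<alpha> \<theta>1] assms by blast
  obtain C2 where "C2 > 0" and b0_bound: "\<And>r K t x. K \<ge> 1 \<Longrightarrow> t > 0 \<Longrightarrow>
      norm (frac_heat_cos_sum \<alpha> t {1..r} (kvec' K) (b0_coeff \<beta>2 \<theta>2 r K) x)
        \<le> C2 * real r powr (- \<beta>2) * t powr (- \<theta>2 / (2 * \<alpha>))"
    using norm_frac_heat_b0_le[of \<alpha> \<theta>2] assms by blast
  have max_mono: "C * a * b \<le> max C1 C2 * a * b" if "C \<in> {C1, C2}" "a \<ge> 0" "b \<ge> 0" for C a b :: real
    using that by (auto intro!: mult_right_mono)
  show ?thesis
    by (intro exI[of _ "max C1 C2"] conjI allI impI
        order.trans[OF u0_bound max_mono] order.trans[OF b0_bound max_mono])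
      (use \<open>C1 > 0\<close> in auto)
qed

end
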